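(* Consider the following game among $N \ge 2$ domains $i = 1,\dots,N$. Domain $i$ chooses quality $q_i \in [0,1]$ and generality $g_i \in [0,1]$ and receives payoff \[ \pi_i = \alpha_i q_i (1 + \beta g_i) + \lambda \sum_{j \neq i} q_j g_j - \Big(\tfrac{\gamma_q}{2} q_i^2 + \tfrac{\gamma_g}{2} g_i^2 q_i + \kappa g_i\Big), \] with parameters $\alpha_i > 0$, $\beta \ge 0$, $\lambda > 0$, $\gamma_q, \gamma_g > 0$, $\kappa \ge 0$. Fix quality levels $q_i > 0$. Let $g_i^{NE}$ be the Nash equilibrium generality of domain $i$ (the maximizer of $\pi_i$ over $g_i$, taking the other domains' choices as given) and let $g_i^{SO}$ be the socially optimal generality (the maximizer over $g_i$ of total domain welfare $\sum_{k=1}^N \pi_k$, abstracting from any consumer utility term), and suppose both are interior solutions characterized by their first-order conditions. Then $g_i^{NE} < g_i^{SO}$, and the generality gap is \[ \Delta g_i = g_i^{SO} - g_i^{NE} = \frac{(N-1)\lambda}{\gamma_g}, \] which is increasing in $N$ and $\lambda$ and decreasing in $\gamma_g$.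
   Context: The model describes an organization with $N$ domain teams producing data products; $q_i$ is the quality and $g_i$ the cross-domain generality (reusability) of domain $i$'s product. The payoff consists of own-analytics benefit $\alpha_i q_i(1+\beta g_i)$, cross-domain benefit $\lambda\sum_{j\ne i} q_j g_j$ from other domains' products, and cost $C_i(q_i,g_i) = \frac{\gamma_q}{2}q_i^2 + \frac{\gamma_g}{2}g_i^2 q_i + \kappa g_i$. *)

theory Defs
  imports Complex_Main
begin

definition payoff ::
  "nat \<Rightarrow> (nat \<Rightarrow> real) \<Rightarrow> real \<Rightarrow> real \<Rightarrow> real \<Rightarrow> real \<Rightarrow> real
   \<Rightarrow> (nat \<Rightarrow> real) \<Rightarrow> (nat \<Rightarrow> real) \<Rightarrow> nat \<Rightarrow> real" where
  "payoff N alpha beta lam gq gg kappa q g i =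
     alpha i * q i * (1 + beta * g i)
     + lam * (\<Sum>j\<in>{..<N} - {i}. q j * g j)
     - (gq / 2 * (q i)^2 + gg / 2 * (g i)^2 * q i + kappa * g i)"

definition welfare ::
  "nat \<Rightarrow> (nat \<Rightarrow> real) \<Rightarrow> real \<Rightarrow> real \<Rightarrow> real \<Rightarrow> real \<Rightarrow> real
   \<Rightarrow> (nat \<Rightarrow> real) \<Rightarrow> (nat \<Rightarrow> real) \<Rightarrow> real" where
  "welfare N alpha beta lam gq gg kappa q g =
     (\<Sum>k<N. payoff N alpha beta lam gq gg kappa q g k)"

end

theory Submission
  imports Defs
begin

text \<open>As functions of the generality of domain i alone, the payoff of domain i and the
total welfare are concave quadratics with the same curvature gg q_i / 2. Their linear
coefficients differ by the externality (N - 1) lam q_i that this generality confers on the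
other domains, so the two first-order conditions differ by exactly (N - 1) lam / gg.\<close>

lemma quadratic_interior_max_foc:
  fixes f :: "real \<Rightarrow> real" and a b c lo hi m :: real
  assumes f: "\<And>x. f x = a + b * x - c * x\<^sup>2"
    and interior: "lo < m" "m < hi"
    and max: "\<And>x. lo \<le> x \<Longrightarrow> x \<le> hi \<Longrightarrow> f x \<le> f m"
  shows "b = 2 * c * m"
proof -
  have deriv: "(f has_real_derivative b - 2 * c * m) (at m)"
    unfolding f[abs_def] by (auto intro!: derivative_eq_intros)
  have local_max: "\<forall>y. \<bar>m - y\<bar> < min (m - lo) (hi - m) \<longrightarrow> f y \<le> f m"
    using max by auto
  have "b - 2 * c * m = 0"
    by (rule DERIV_local_max[OF deriv _ local_max]) (use interior in simp)
  then show ?thesis by simp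
qed

lemma sum_mult_fun_upd:
  fixes q g :: "'a \<Rightarrow> 'b :: semiring_0"
  assumes "finite S" "i \<in> S"
  shows "(\<Sum>j\<in>S. q j * (g(i := x)) j) = q i * x + (\<Sum>j\<in>S - {i}. q j * g j)"
proof -
  have "(\<Sum>j\<in>S. q j * (g(i := x)) j) = q i * x + (\<Sum>j\<in>S - {i}. q j * (g(i := x)) j)"
    using assms by (simp add: sum.remove)
  also have "(\<Sum>j\<in>S - {i}. q j * (g(i := x)) j) = (\<Sum>j\<in>S - {i}. q j * g j)"
    by (rule sum.cong) auto
  finally show ?thesis .
qed

lemma payoff_fun_upd_self:
  "payoff N alpha beta lam gq gg kappa q (g(i := x)) i
   = payoff N alpha beta lam gq gg kappa q (g(i := 0)) i
     + (alpha i * q i * beta - kappa) * x - (gg * q i / 2) * x\<^sup>2"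
proof -
  have "(\<Sum>j\<in>{..<N} - {i}. q j * (g(i := x)) j) = (\<Sum>j\<in>{..<N} - {i}. q j * (g(i := 0)) j)"
    by (rule sum.cong) auto
  then show ?thesis
    unfolding payoff_def by (simp add: algebra_simps)
qed

lemma payoff_fun_upd_other:
  assumes "k \<noteq> i" "i < N"
  shows "payoff N alpha beta lam gq gg kappa q (g(i := x)) k
   = payoff N alpha beta lam gq gg kappa q (g(i := 0)) k + lam * q i * x"
proof -
  have i_other: "i \<in> {..<N} - {k}" using assms by simp
  show ?thesis
    unfolding payoff_def sum_mult_fun_upd[OF finite_Diff[OF finite_lessThan] i_other]
    using assms by (simp add: algebra_simps)
qed

lemma welfare_fun_upd:
  assumes "i < N"
  shows "welfare N alpha beta lam gq gg kappa q (g(i := x))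
   = welfare N alpha beta lam gq gg kappa q (g(i := 0))
     + (alpha i * q i * beta - kappa + (real N - 1) * lam * q i) * x - (gg * q i / 2) * x\<^sup>2"
proof -
  let ?P = "\<lambda>x k. payoff N alpha beta lam gq gg kappa q (g(i := x)) k"
  have split_i: "(\<Sum>k<N. h k) = h i + (\<Sum>k\<in>{..<N} - {i}. h k)" for h :: "nat \<Rightarrow> real"
    using assms by (simp add: sum.remove)
  \<comment> \<open>The update lemmas are instantiated at x: their right-hand sides match their
    left-hand sides again with x = 0, so as unrestricted rewrite rules they loop.\<close>
  have "(\<Sum>k\<in>{..<N} - {i}. ?P x k) = (\<Sum>k\<in>{..<N} - {i}. ?P 0 k + lam * q i * x)"
    using assms by (intro sum.cong) (auto simp: payoff_fun_upd_other[where x = x])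
  also have "\<dots> = (\<Sum>k\<in>{..<N} - {i}. ?P 0 k) + (real N - 1) * (lam * q i * x)"
    using assms by (simp add: sum.distrib card_Diff_singleton of_nat_diff)
  finally show ?thesis
    unfolding welfare_def split_i[of "?P x"] split_i[of "?P 0"] payoff_fun_upd_self[where x = x]
    by (simp add: algebra_simps)
qed

theorem proposition1:
  fixes N :: nat and alpha :: "nat \<Rightarrow> real"
    and beta lam gq gg kappa :: real
    and q g :: "nat \<Rightarrow> real" and i :: nat and gNE gSO :: real
  assumes N2: "N \<ge> 2"
    and alpha_pos: "\<And>j. j < N \<Longrightarrow> alpha j > 0"
    and beta_nn: "beta \<ge> 0" and lam_pos: "lam > 0"
    and gq_pos: "gq > 0" and gg_pos: "gg > 0" and kappa_nn: "kappa \<ge> 0"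
    and q_range: "\<And>j. j < N \<Longrightarrow> 0 < q j \<and> q j \<le> 1"
    and g_range: "\<And>j. j < N \<Longrightarrow> 0 \<le> g j \<and> g j \<le> 1"
    and i_dom: "i < N"
    and NE_interior: "0 < gNE" "gNE < 1"
    and NE_max: "\<And>x. 0 \<le> x \<Longrightarrow> x \<le> 1 \<Longrightarrow>
       payoff N alpha beta lam gq gg kappa q (g(i := x)) i
         \<le> payoff N alpha beta lam gq gg kappa q (g(i := gNE)) i"
    and SO_interior: "0 < gSO" "gSO < 1"
    and SO_max: "\<And>x. 0 \<le> x \<Longrightarrow> x \<le> 1 \<Longrightarrow>
       welfare N alpha beta lam gq gg kappa q (g(i := x))
         \<le> welfare N alpha beta lam gq gg kappa q (g(i := gSO))"
  shows "gNE < gSO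
    \<and> gSO - gNE = (real N - 1) * lam / gg
    \<and> (\<forall>N'::nat. N < N' \<longrightarrow> (real N - 1) * lam / gg < (real N' - 1) * lam / gg)
    \<and> (\<forall>lam'. lam < lam' \<longrightarrow> (real N - 1) * lam / gg < (real N - 1) * lam' / gg)
    \<and> (\<forall>gg'. gg < gg' \<longrightarrow> (real N - 1) * lam / gg' < (real N - 1) * lam / gg)"
proof -
  have qi_pos: "q i > 0" using q_range i_dom by auto
  have NE_foc: "alpha i * q i * beta - kappa = 2 * (gg * q i / 2) * gNE"
    by (rule quadratic_interior_max_foc[where f = "\<lambda>x. payoff N alpha beta lam gq gg kappa q (g(i := x)) i",
          OF payoff_fun_upd_self NE_interior NE_max])
  have SO_foc: "alpha i * q i * beta - kappa + (real N - 1) * lam * q i = 2 * (gg * q i / 2) * gSO"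
    by (rule quadratic_interior_max_foc[where f = "\<lambda>x. welfare N alpha beta lam gq gg kappa q (g(i := x))",
          OF welfare_fun_upd[OF i_dom] SO_interior SO_max])
  have "q i * ((real N - 1) * lam) = q i * (gg * (gSO - gNE))"
    using NE_foc SO_foc by (simp add: algebra_simps)
  then have "(real N - 1) * lam = gg * (gSO - gNE)"
    using qi_pos by simp
  then have gap: "gSO - gNE = (real N - 1) * lam / gg"
    using gg_pos by (simp add: field_simps)
  have N1_pos: "real N - 1 > 0" using N2 by simp
  then have "(real N - 1) * lam / gg > 0" using lam_pos gg_pos by simp
  then have "gNE < gSO" using gap by linarith
  moreover have "(real N - 1) * lam / gg < (real N' - 1) * lam / gg" if "N < N'" for N' :: nat
    using that lam_pos gg_pos by (intro divide_strict_right_mono mult_strict_right_mono) auto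
  moreover have "(real N - 1) * lam / gg < (real N - 1) * lam' / gg" if "lam < lam'" for lam'
    using that N1_pos gg_pos by (intro divide_strict_right_mono mult_strict_left_mono)
  moreover have "(real N - 1) * lam / gg' < (real N - 1) * lam / gg" if "gg < gg'" for gg'
    using that N1_pos lam_pos gg_pos by (intro divide_strict_left_mono) auto
  ultimately show ?thesis using gap by blast
qed

end
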